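(* Consider $n$ sub-populations with constant sizes $N_i>0$ and constant nonnegative flows $F_{ij}\ge 0$ ($i\neq j$; $F_{ij}$ is the number of individuals per unit time flowing from sub-population $j$ to sub-population $i$, $F_{ii}=0$), and the dynamics, for $i\in[n]$, \begin{align*} \dot s_i &= \alpha_i r_i-\beta_i x_i s_i+\tfrac{1}{N_i}\textstyle\sum_{j\neq i}(F_{ij}s_j-F_{ji}s_i),\\ \dot e_i &= \beta_i x_i s_i-\sigma_i e_i+\tfrac{1}{N_i}\textstyle\sum_{j\neq i}(F_{ij}e_j-F_{ji}e_i),\\ \dot x_i &= \sigma_i e_i-\delta_i x_i+\tfrac{1}{N_i}\textstyle\sum_{j\neq i}(F_{ij}x_j-F_{ji}x_i),\\ \dot r_i &= \delta_i x_i-\alpha_i r_i+\tfrac{1}{N_i}\textstyle\sum_{j\neq i}(F_{ij}r_j-F_{ji}r_i). \end{align*} Assume (A1) for every $j\in[n]$, $\sum_{i\neq j}F_{ji}=\sum_{i\neq j}F_{ij}$ (total inflow into $j$ equals total outflow from $j$); and (A2) $\alpha_i,\beta_i,\sigma_i,\delta_i>0$ for all $i$, and the initial values at time $t_0\ge 0$ satisfy $s_i(t_0),e_i(t_0),x_i(t_0),r_i(t_0)\in[0,1]$ and $s_i(t_0)+e_i(t_0)+x_i(t_0)+r_i(t_0)=1$ for all $i\in[n]$. Then $s_i(t),e_i(t),x_i(t),r_i(t)\in[0,1]$ and $s_i(t)+e_i(t)+x_i(t)+r_i(t)=1$ for all $i\in[n]$ and all $t\ge 0$.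
   Context: This is a networked SEIRS epidemic model: $s_i,e_i,x_i,r_i$ are the proportions of susceptible, exposed, infected and recovered individuals in sub-population $i$; $\beta_i$ is the infection rate, $\sigma_i$ the exposed-to-infected rate, $\delta_i$ the healing rate, $\alpha_i$ the rate of immunity loss. *)

theory Defs
  imports "HOL-Analysis.Analysis"
begin

end

theory Submission
  imports Defs
begin

text \<open>
  Everything rests on a minimum principle for finitely many functions \<open>y\<^sub>k\<close>: if at any
  time where \<open>y\<^sub>k\<close> is a nonpositive minimum of the family its derivative is at least
  \<open>L y\<^sub>k\<close>, then nonnegativity is preserved. (Perturb by \<open>\<epsilon> exp((L+1)(t - t\<^sub>0))\<close> and look at
  the first time some perturbed component reaches zero: its derivative there is positive,
  although it has just decreased to zero.)

  The node totals \<open>s\<^sub>i + e\<^sub>i + x\<^sub>i + r\<^sub>i\<close> obey the pure flow equation, whose right-hand side is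
  nonnegative at a minimal node by the balance condition (A1); the minimum principle for
  \<open>total - 1\<close> and \<open>1 - total\<close> therefore keeps every total at 1. Applied to all \<open>4n\<close>
  compartments at once, it also gives nonnegativity: at a nonpositive minimal compartment the flow term is again
  nonnegative, and every reaction term is bounded below by a multiple of that compartment,
  the bilinear infection term \<open>\<beta>\<^sub>i x\<^sub>i s\<^sub>i\<close> with a constant depending on bounds for \<open>x\<^sub>i, s\<^sub>i\<close>
  on the finite time horizon.
\<close>

lemma has_real_derivative_nonpos_if_left_ge:
  fixes f :: "real \<Rightarrow> real"
  assumes deriv: "(f has_real_derivative D) (at \<tau> within {a..})"
    and "a < \<tau>" and left_ge: "\<And>s. a \<le> s \<Longrightarrow> s < \<tau> \<Longrightarrow> f \<tau> \<le> f s"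
  shows "D \<le> 0"
proof (rule ccontr)
  assume "\<not> D \<le> 0"
  then obtain d where "d > 0" and d: "\<And>h. h > 0 \<Longrightarrow> \<tau> - h \<in> {a..} \<Longrightarrow> h < d \<Longrightarrow> f (\<tau> - h) < f \<tau>"
    using has_real_derivative_pos_inc_left[OF deriv] by force
  define h where "h = min d (\<tau> - a) / 2"
  have "h > 0" "h < d" "a \<le> \<tau> - h" "\<tau> - h < \<tau>"
    using \<open>d > 0\<close> \<open>a < \<tau>\<close> by (auto simp: h_def min_def field_simps)
  then show False
    using d[of h] left_ge[of "\<tau> - h"] by auto
qed

lemma first_nonpositive_time:
  fixes w :: "'k \<Rightarrow> real \<Rightarrow> real"
  assumes "finite K"
    and cont: "\<And>k. k \<in> K \<Longrightarrow> continuous_on {a..b} (w k)"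
    and pos: "\<And>k. k \<in> K \<Longrightarrow> w k a > 0"
    and "k \<in> K" "s \<in> {a..b}" "w k s \<le> 0"
  obtains \<tau> k0 where "a < \<tau>" "\<tau> \<le> b" "k0 \<in> K" "w k0 \<tau> = 0"
    and "\<And>j. j \<in> K \<Longrightarrow> w j \<tau> \<ge> 0"
    and "\<And>j s. j \<in> K \<Longrightarrow> a \<le> s \<Longrightarrow> s < \<tau> \<Longrightarrow> w j s > 0"
proof -
  define S where "S = (\<Union>k\<in>K. {s \<in> {a..b}. w k s \<le> 0})"
  have "closed S"
    unfolding S_def using \<open>finite K\<close> cont
    by (intro closed_UN ballI continuous_on_closed_Collect_le) auto
  moreover have "S \<noteq> {}" "bdd_below S"
    using assms(4-6) by (auto simp: S_def intro: bdd_belowI[of _ a])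
  ultimately have "Inf S \<in> S"
    by (rule closed_contains_Inf[rotated -1])
  then obtain k0 where k0: "k0 \<in> K" "a \<le> Inf S" "Inf S \<le> b" "w k0 (Inf S) \<le> 0"
    by (auto simp: S_def)
  have before: "w j s > 0" if "j \<in> K" "a \<le> s" "s < Inf S" for j s
  proof (rule ccontr)
    assume "\<not> w j s > 0"
    then have "s \<in> S"
      using that k0 by (auto simp: S_def not_less intro!: bexI[of _ j])
    then show False
      using \<open>bdd_below S\<close> cInf_lower that(3) by fastforce
  qed
  have "a \<noteq> Inf S"
    using pos[OF k0(1)] k0(4) by auto
  then have "a < Inf S"
    using k0(2) by simp
  have at_inf: "w j (Inf S) \<ge> 0" if "j \<in> K" for j
  proof (rule continuous_ge_on_closure[of "{a..<Inf S}" "w j"])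
    show "continuous_on (closure {a..<Inf S}) (w j)"
      using \<open>a < Inf S\<close> k0(3) by (auto intro: continuous_on_subset[OF cont[OF that]])
    show "Inf S \<in> closure {a..<Inf S}"
      using \<open>a < Inf S\<close> by simp
  qed (use before that in force)
  show thesis
    using that[OF \<open>a < Inf S\<close> k0(3,1) _ at_inf before] at_inf[OF k0(1)] k0(4) by simp
qed

lemma common_lower_rate:
  fixes y D :: "'k \<Rightarrow> real \<Rightarrow> real"
  assumes "finite K"
    and rate: "\<And>k. k \<in> K \<Longrightarrow> \<exists>L. \<forall>t\<in>A. y k t \<le> 0 \<longrightarrow> P k t \<longrightarrow> L * y k t \<le> D k t"
  obtains L where "\<And>k t. k \<in> K \<Longrightarrow> t \<in> A \<Longrightarrow> y k t \<le> 0 \<Longrightarrow> P k t \<Longrightarrow> L * y k t \<le> D k t"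
proof -
  obtain R where R: "\<And>k t. k \<in> K \<Longrightarrow> t \<in> A \<Longrightarrow> y k t \<le> 0 \<Longrightarrow> P k t \<Longrightarrow> R k * y k t \<le> D k t"
    using bchoice[of K "\<lambda>k L. \<forall>t\<in>A. y k t \<le> 0 \<longrightarrow> P k t \<longrightarrow> L * y k t \<le> D k t"] rate by blast
  show thesis
  proof
    fix k t assume "k \<in> K" "t \<in> A" "y k t \<le> 0" "P k t"
    have "R k \<le> (\<Sum>k\<in>K. \<bar>R k\<bar>)"
      using member_le_sum[of k K "\<lambda>k. \<bar>R k\<bar>"] \<open>finite K\<close> \<open>k \<in> K\<close> by simp
    then have "(\<Sum>k\<in>K. \<bar>R k\<bar>) * y k t \<le> R k * y k t"
      using \<open>y k t \<le> 0\<close> by (rule mult_right_mono_neg)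
    also have "\<dots> \<le> D k t"
      using R \<open>k \<in> K\<close> \<open>t \<in> A\<close> \<open>y k t \<le> 0\<close> \<open>P k t\<close> .
    finally show "(\<Sum>k\<in>K. \<bar>R k\<bar>) * y k t \<le> D k t" .
  qed
qed

lemma nonneg_invariant_quasi_positive:
  fixes y D :: "'k \<Rightarrow> real \<Rightarrow> real"
  assumes "finite K"
    and deriv: "\<And>k t. k \<in> K \<Longrightarrow> t \<ge> t0 \<Longrightarrow> (y k has_real_derivative D k t) (at t within {t0..})"
    and init: "\<And>k. k \<in> K \<Longrightarrow> y k t0 \<ge> 0"
    and rate: "\<And>k T. k \<in> K \<Longrightarrow>
      \<exists>L. \<forall>t\<in>{t0..T}. y k t \<le> 0 \<longrightarrow> (\<forall>j\<in>K. y k t \<le> y j t) \<longrightarrow> L * y k t \<le> D k t"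
    and "k \<in> K" "t \<ge> t0"
  shows "y k t \<ge> 0"
proof -
  obtain L where L: "\<And>k s. k \<in> K \<Longrightarrow> s \<in> {t0..t} \<Longrightarrow> y k s \<le> 0 \<Longrightarrow>
      (\<forall>j\<in>K. y k s \<le> y j s) \<Longrightarrow> L * y k s \<le> D k s"
    using common_lower_rate[where A = "{t0..t}" and P = "\<lambda>k s. \<forall>j\<in>K. y k s \<le> y j s",
        OF \<open>finite K\<close> rate] by metis
  define E where "E s = exp ((L + 1) * (s - t0))" for s
  have "E s > 0" for s
    by (simp add: E_def)
  have perturbed_pos: "y j s + \<epsilon> * E s > 0" if "\<epsilon> > 0" "j \<in> K" "s \<in> {t0..t}" for \<epsilon> j s
  proof (rule ccontr)
    assume nonpos: "\<not> ?thesis"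
    define w where "w j s = y j s + \<epsilon> * E s" for j s
    have dw: "(w j has_real_derivative D j s + \<epsilon> * ((L + 1) * E s)) (at s within {t0..})"
      if "j \<in> K" "s \<ge> t0" for j s
      unfolding w_def E_def using deriv[OF that]
      by (auto intro!: derivative_eq_intros)
    have cont: "continuous_on {t0..t} (w j)" if "j \<in> K" for j
      using DERIV_continuous_on[of "{t0..}" "w j"] dw[OF that]
      by (force intro: continuous_on_subset)
    have start: "w j t0 > 0" if "j \<in> K" for j
      using init[OF that] \<open>\<epsilon> > 0\<close> by (simp add: w_def E_def)
    have "w j s \<le> 0"
      using nonpos by (simp add: w_def)
    then obtain \<tau> k0 where "t0 < \<tau>" "\<tau> \<le> t" "k0 \<in> K" "w k0 \<tau> = 0"
      and at_\<tau>: "\<And>j. j \<in> K \<Longrightarrow> w j \<tau> \<ge> 0"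
      and before_\<tau>: "\<And>j s. j \<in> K \<Longrightarrow> t0 \<le> s \<Longrightarrow> s < \<tau> \<Longrightarrow> w j s > 0"
      using first_nonpositive_time[where w = w and a = t0 and b = t] \<open>finite K\<close> cont start
        \<open>j \<in> K\<close> \<open>s \<in> {t0..t}\<close> by blast
    have "\<epsilon> * E \<tau> > 0"
      using \<open>\<epsilon> > 0\<close> \<open>E \<tau> > 0\<close> by simp
    have y_k0: "y k0 \<tau> = - (\<epsilon> * E \<tau>)"
      using \<open>w k0 \<tau> = 0\<close> by (simp add: w_def)
    moreover have "\<forall>j\<in>K. y k0 \<tau> \<le> y j \<tau>"
      using at_\<tau> y_k0 by (force simp: w_def)
    ultimately have "- (L * (\<epsilon> * E \<tau>)) \<le> D k0 \<tau>"
      using L[OF \<open>k0 \<in> K\<close>, of \<tau>] \<open>t0 < \<tau>\<close> \<open>\<tau> \<le> t\<close> \<open>\<epsilon> * E \<tau> > 0\<close> by simp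
    moreover have "D k0 \<tau> + \<epsilon> * ((L + 1) * E \<tau>) \<le> 0"
      using \<open>t0 < \<tau>\<close> \<open>w k0 \<tau> = 0\<close> before_\<tau>[OF \<open>k0 \<in> K\<close>] \<open>k0 \<in> K\<close>
      by (intro has_real_derivative_nonpos_if_left_ge[OF dw]) (auto intro: less_imp_le)
    ultimately show False
      using \<open>\<epsilon> * E \<tau> > 0\<close> by (simp add: algebra_simps)
  qed
  show ?thesis
  proof (rule ccontr)
    assume "\<not> y k t \<ge> 0"
    then have "- y k t / E t > 0"
      using \<open>E t > 0\<close> by (simp add: divide_neg_pos)
    from perturbed_pos[OF this \<open>k \<in> K\<close>, of t] show False
      using \<open>t \<ge> t0\<close> \<open>E t > 0\<close> by simp
  qed
qed

lemma mult_ge_bound_mult_min: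
  fixes m a b B :: real
  assumes "m \<le> 0" "m \<le> a" "m \<le> b" "\<bar>a\<bar> \<le> B" "\<bar>b\<bar> \<le> B"
  shows "B * m \<le> a * b"
proof -
  have "B * m \<le> 0"
    using assms by (simp add: mult_nonneg_nonpos)
  consider "a \<ge> 0" "b \<ge> 0" | "a < 0" "b < 0" | "a < 0" "b \<ge> 0" | "a \<ge> 0" "b < 0"
    by linarith
  then show ?thesis
  proof cases
    case 1
    then show ?thesis
      using \<open>B * m \<le> 0\<close> mult_nonneg_nonneg[of a b] by linarith
  next
    case 2
    then show ?thesis
      using \<open>B * m \<le> 0\<close> mult_neg_neg[of a b] by linarith
  next
    case 3
    have "B * m \<le> b * m"
      using assms by (intro mult_right_mono_neg) auto
    also have "\<dots> \<le> b * a"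
      using 3 assms by (intro mult_left_mono) auto
    finally show ?thesis by (simp add: mult.commute)
  next
    case 4
    have "B * m \<le> a * m"
      using assms by (intro mult_right_mono_neg) auto
    also have "\<dots> \<le> a * b"
      using 4 assms by (intro mult_left_mono) auto
    finally show ?thesis .
  qed
qed

definition net_inflow :: "nat \<Rightarrow> (nat \<Rightarrow> nat \<Rightarrow> real) \<Rightarrow> (nat \<Rightarrow> real) \<Rightarrow> nat \<Rightarrow> real" where
  "net_inflow n F z i = (\<Sum>j\<in>{..<n} - {i}. F i j * z j - F j i * z i)"

lemma net_inflow_add:
  "net_inflow n F (\<lambda>j. z j + w j) i = net_inflow n F z i + net_inflow n F w i"
  by (simp add: net_inflow_def sum.distrib[symmetric] algebra_simps)

lemma net_inflow_diff:
  "net_inflow n F (\<lambda>j. z j - w j) i = net_inflow n F z i - net_inflow n F w i"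
  by (simp add: net_inflow_def sum_subtractf[symmetric] algebra_simps)

lemma net_inflow_const:
  assumes "(\<Sum>j\<in>{..<n} - {i}. F i j) = (\<Sum>j\<in>{..<n} - {i}. F j i)"
  shows "net_inflow n F (\<lambda>_. c) i = 0"
  using assms by (simp add: net_inflow_def sum_subtractf sum_distrib_right[symmetric])

lemma net_inflow_nonneg_at_min:
  assumes "\<And>j. j < n \<Longrightarrow> j \<noteq> i \<Longrightarrow> F i j \<ge> 0"
    and "(\<Sum>j\<in>{..<n} - {i}. F i j) = (\<Sum>j\<in>{..<n} - {i}. F j i)"
    and "\<And>j. j < n \<Longrightarrow> z i \<le> z j"
  shows "net_inflow n F z i \<ge> 0"
proof -
  have "0 = net_inflow n F (\<lambda>_. z i) i"
    using net_inflow_const[OF assms(2)] by simp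
  also have "\<dots> \<le> net_inflow n F z i"
    unfolding net_inflow_def using assms(1,3) by (intro sum_mono) (auto intro: mult_left_mono)
  finally show ?thesis .
qed

locale balanced_network =
  fixes n :: nat and N :: "nat \<Rightarrow> real" and F :: "nat \<Rightarrow> nat \<Rightarrow> real"
  assumes N_pos: "\<And>i. i < n \<Longrightarrow> N i > 0"
    and F_nonneg: "\<And>i j. i < n \<Longrightarrow> j < n \<Longrightarrow> i \<noteq> j \<Longrightarrow> F i j \<ge> 0"
    and flow_balance: "\<And>j. j < n \<Longrightarrow>
      (\<Sum>i\<in>{..<n} - {j}. F j i) = (\<Sum>i\<in>{..<n} - {j}. F i j)"
begin

lemma flow_term_nonneg_at_min:
  assumes "i < n" "\<And>j. j < n \<Longrightarrow> z i \<le> z j"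
  shows "(1 / N i) * net_inflow n F z i \<ge> 0"
  using assms N_pos[OF \<open>i < n\<close>] F_nonneg flow_balance
  by (intro mult_nonneg_nonneg net_inflow_nonneg_at_min) auto

lemma flow_preserves_nonneg:
  assumes deriv: "\<And>i t. i < n \<Longrightarrow> t \<ge> t0 \<Longrightarrow>
      (y i has_real_derivative (1 / N i) * net_inflow n F (\<lambda>j. y j t) i) (at t within {t0..})"
    and init: "\<And>i. i < n \<Longrightarrow> y i t0 \<ge> 0"
    and "i < n" "t \<ge> t0"
  shows "y i t \<ge> 0"
proof (rule nonneg_invariant_quasi_positive[of "{..<n}" t0 y
    "\<lambda>k t. (1 / N k) * net_inflow n F (\<lambda>j. y j t) k"])
  show "\<exists>L. \<forall>t\<in>{t0..T}. y k t \<le> 0 \<longrightarrow> (\<forall>j\<in>{..<n}. y k t \<le> y j t) \<longrightarrow>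
      L * y k t \<le> (1 / N k) * net_inflow n F (\<lambda>j. y j t) k" if "k \<in> {..<n}" for k T
    using that flow_term_nonneg_at_min[of k "\<lambda>j. y j _"] by (intro exI[of _ 0]) auto
qed (use assms in auto)

end

datatype compartment = Susceptible | Exposed | Infected | Recovered

lemma UNIV_compartment: "(UNIV :: compartment set) = {Susceptible, Exposed, Infected, Recovered}"
  using compartment.exhaust by auto

locale seirs_network = balanced_network +
  fixes \<alpha> \<beta> \<sigma> \<delta> :: "nat \<Rightarrow> real"
    and s e x r :: "nat \<Rightarrow> real \<Rightarrow> real"
    and t0 :: real
  assumes rates_pos: "\<And>i. i < n \<Longrightarrow> \<alpha> i > 0 \<and> \<beta> i > 0 \<and> \<sigma> i > 0 \<and> \<delta> i > 0"
    and init: "\<And>i. i < n \<Longrightarrow>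
      s i t0 \<in> {0..1} \<and> e i t0 \<in> {0..1} \<and> x i t0 \<in> {0..1} \<and> r i t0 \<in> {0..1} \<and>
      s i t0 + e i t0 + x i t0 + r i t0 = 1"
    and ds: "\<And>i t. i < n \<Longrightarrow> t \<ge> t0 \<Longrightarrow>
      (s i has_real_derivative
        \<alpha> i * r i t - \<beta> i * x i t * s i t + (1 / N i) * net_inflow n F (\<lambda>j. s j t) i)
        (at t within {t0..})"
    and de: "\<And>i t. i < n \<Longrightarrow> t \<ge> t0 \<Longrightarrow>
      (e i has_real_derivative
        \<beta> i * x i t * s i t - \<sigma> i * e i t + (1 / N i) * net_inflow n F (\<lambda>j. e j t) i)
        (at t within {t0..})"
    and dx: "\<And>i t. i < n \<Longrightarrow> t \<ge> t0 \<Longrightarrow>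
      (x i has_real_derivative
        \<sigma> i * e i t - \<delta> i * x i t + (1 / N i) * net_inflow n F (\<lambda>j. x j t) i)
        (at t within {t0..})"
    and dr: "\<And>i t. i < n \<Longrightarrow> t \<ge> t0 \<Longrightarrow>
      (r i has_real_derivative
        \<delta> i * x i t - \<alpha> i * r i t + (1 / N i) * net_inflow n F (\<lambda>j. r j t) i)
        (at t within {t0..})"
begin

definition fraction :: "compartment \<Rightarrow> nat \<Rightarrow> real \<Rightarrow> real" where
  "fraction c = (case c of Susceptible \<Rightarrow> s | Exposed \<Rightarrow> e | Infected \<Rightarrow> x | Recovered \<Rightarrow> r)"

definition reaction :: "compartment \<Rightarrow> nat \<Rightarrow> real \<Rightarrow> real" where
  "reaction c i t = (case c of
      Susceptible \<Rightarrow> \<alpha> i * r i t - \<beta> i * x i t * s i t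
    | Exposed \<Rightarrow> \<beta> i * x i t * s i t - \<sigma> i * e i t
    | Infected \<Rightarrow> \<sigma> i * e i t - \<delta> i * x i t
    | Recovered \<Rightarrow> \<delta> i * x i t - \<alpha> i * r i t)"

definition total :: "nat \<Rightarrow> real \<Rightarrow> real" where
  "total i t = s i t + e i t + x i t + r i t"

lemma fraction_deriv:
  assumes "i < n" "t \<ge> t0"
  shows "(fraction c i has_real_derivative
      reaction c i t + (1 / N i) * net_inflow n F (\<lambda>j. fraction c j t) i) (at t within {t0..})"
  using ds[OF assms] de[OF assms] dx[OF assms] dr[OF assms]
  by (cases c) (simp_all add: fraction_def reaction_def)

lemma total_deriv:
  assumes "i < n" "t \<ge> t0"
  shows "(total i has_real_derivative (1 / N i) * net_inflow n F (\<lambda>j. total j t) i)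
      (at t within {t0..})"
proof -
  have "((\<lambda>t. s i t + e i t + x i t + r i t) has_real_derivative
      (\<alpha> i * r i t - \<beta> i * x i t * s i t + (1 / N i) * net_inflow n F (\<lambda>j. s j t) i)
      + (\<beta> i * x i t * s i t - \<sigma> i * e i t + (1 / N i) * net_inflow n F (\<lambda>j. e j t) i)
      + (\<sigma> i * e i t - \<delta> i * x i t + (1 / N i) * net_inflow n F (\<lambda>j. x j t) i)
      + (\<delta> i * x i t - \<alpha> i * r i t + (1 / N i) * net_inflow n F (\<lambda>j. r j t) i))
      (at t within {t0..})"
    using assms by (intro DERIV_add ds de dx dr)
  then show ?thesis
    unfolding total_def[abs_def]
    by (rule DERIV_cong) (simp add: net_inflow_add algebra_simps)
qed

lemma total_eq_one:
  assumes "i < n" "t \<ge> t0"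
  shows "total i t = 1"
proof -
  have const: "net_inflow n F (\<lambda>_. 1) i = 0" if "i < n" for i
    using flow_balance[OF that] by (intro net_inflow_const) simp
  have "total i t - 1 \<ge> 0"
  proof (rule flow_preserves_nonneg[where y = "\<lambda>i t. total i t - 1"])
    show "((\<lambda>t. total i t - 1) has_real_derivative
        (1 / N i) * net_inflow n F (\<lambda>j. total j t - 1) i) (at t within {t0..})"
      if "i < n" "t \<ge> t0" for i t
      using DERIV_diff[OF total_deriv[OF that] DERIV_const[of 1]] const[OF \<open>i < n\<close>]
      by (simp add: net_inflow_diff)
  qed (use assms init in \<open>auto simp: total_def\<close>)
  moreover have "1 - total i t \<ge> 0"
  proof (rule flow_preserves_nonneg[where y = "\<lambda>i t. 1 - total i t"])
    show "((\<lambda>t. 1 - total i t) has_real_derivative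
        (1 / N i) * net_inflow n F (\<lambda>j. 1 - total j t) i) (at t within {t0..})"
      if "i < n" "t \<ge> t0" for i t
      using DERIV_diff[OF DERIV_const[of 1] total_deriv[OF that]] const[OF \<open>i < n\<close>]
      by (simp add: net_inflow_diff)
  qed (use assms init in \<open>auto simp: total_def\<close>)
  ultimately show ?thesis
    by simp
qed

lemma reaction_lower_bound:
  assumes "i < n" and nonpos: "fraction c i t \<le> 0"
    and min: "\<And>c'. fraction c i t \<le> fraction c' i t"
    and "\<bar>x i t\<bar> \<le> B" "\<bar>s i t\<bar> \<le> B"
  shows "(\<alpha> i + \<beta> i * B + \<sigma> i + \<delta> i) * fraction c i t \<le> reaction c i t"
proof -
  have pos: "\<alpha> i > 0" "\<beta> i > 0" "\<sigma> i > 0" "\<delta> i > 0"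
    using rates_pos[OF \<open>i < n\<close>] by auto
  have "B \<ge> 0"
    using \<open>\<bar>x i t\<bar> \<le> B\<close> by linarith
  have below: "fraction c i t \<le> s i t" "fraction c i t \<le> e i t"
      "fraction c i t \<le> x i t" "fraction c i t \<le> r i t"
    using min[of Susceptible] min[of Exposed] min[of Infected] min[of Recovered]
    by (simp_all add: fraction_def)
  have "\<sigma> i * fraction c i t \<le> 0" "\<delta> i * fraction c i t \<le> 0" "\<alpha> i * fraction c i t \<le> 0"
      "\<beta> i * B * fraction c i t \<le> 0"
    using pos \<open>B \<ge> 0\<close> nonpos by (simp_all add: mult_nonneg_nonpos)
  show ?thesis
  proof (cases c)
    case Susceptible
    have "x i t * s i t \<le> \<bar>x i t\<bar> * \<bar>s i t\<bar>"
      by (metis abs_ge_self abs_mult)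
    also have "\<dots> = \<bar>x i t\<bar> * - s i t"
      using nonpos by (simp add: Susceptible fraction_def)
    also have "\<dots> \<le> B * - s i t"
      using \<open>\<bar>x i t\<bar> \<le> B\<close> nonpos by (intro mult_right_mono) (auto simp: Susceptible fraction_def)
    finally have "\<beta> i * (x i t * s i t) \<le> \<beta> i * (B * - s i t)"
      using pos by (intro mult_left_mono) auto
    moreover have "\<alpha> i * s i t \<le> \<alpha> i * r i t"
      using below pos by (simp add: Susceptible fraction_def)
    ultimately show ?thesis
      using \<open>\<sigma> i * fraction c i t \<le> 0\<close> \<open>\<delta> i * fraction c i t \<le> 0\<close>
      by (simp add: Susceptible fraction_def reaction_def algebra_simps)
  next
    case Exposed
    have "B * e i t \<le> x i t * s i t"
      using below nonpos \<open>\<bar>x i t\<bar> \<le> B\<close> \<open>\<bar>s i t\<bar> \<le> B\<close>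
      by (intro mult_ge_bound_mult_min) (simp_all add: Exposed fraction_def)
    then have "\<beta> i * (B * e i t) \<le> \<beta> i * (x i t * s i t)"
      using pos by (intro mult_left_mono) auto
    then show ?thesis
      using \<open>\<sigma> i * fraction c i t \<le> 0\<close> \<open>\<delta> i * fraction c i t \<le> 0\<close> \<open>\<alpha> i * fraction c i t \<le> 0\<close>
      by (simp add: Exposed fraction_def reaction_def algebra_simps)
  next
    case Infected
    have "\<sigma> i * x i t \<le> \<sigma> i * e i t"
      using below pos by (simp add: Infected fraction_def)
    then show ?thesis
      using \<open>\<delta> i * fraction c i t \<le> 0\<close> \<open>\<alpha> i * fraction c i t \<le> 0\<close>
        \<open>\<beta> i * B * fraction c i t \<le> 0\<close>
      by (simp add: Infected fraction_def reaction_def algebra_simps)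
  next
    case Recovered
    have "\<delta> i * r i t \<le> \<delta> i * x i t"
      using below pos by (simp add: Recovered fraction_def)
    then show ?thesis
      using \<open>\<sigma> i * fraction c i t \<le> 0\<close> \<open>\<alpha> i * fraction c i t \<le> 0\<close>
        \<open>\<beta> i * B * fraction c i t \<le> 0\<close>
      by (simp add: Recovered fraction_def reaction_def algebra_simps)
  qed
qed

lemma fraction_bounded:
  assumes "i < n"
  obtains B where "\<And>t. t \<in> {t0..T} \<Longrightarrow> \<bar>fraction c i t\<bar> \<le> B"
proof -
  have "continuous_on {t0..} (fraction c i)"
    using fraction_deriv[OF assms] by (intro DERIV_continuous_on) auto
  then have "continuous_on {t0..T} (fraction c i)"
    by (rule continuous_on_subset) auto
  then show thesis
    using continuous_on_compact_bound[of "{t0..T}" "fraction c i"] that by auto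
qed

lemma fraction_nonneg:
  assumes "i < n" "t \<ge> t0"
  shows "fraction c i t \<ge> 0"
proof -
  define y where "y = (\<lambda>(i, c). fraction c i)"
  define D where "D = (\<lambda>(i, c) t. reaction c i t + (1 / N i) * net_inflow n F (\<lambda>j. fraction c j t) i)"
  have "y (i, c) t \<ge> 0"
  proof (rule nonneg_invariant_quasi_positive[of "{..<n} \<times> UNIV" t0 y D])
    show "finite ({..<n} \<times> (UNIV :: compartment set))"
      by (simp add: UNIV_compartment)
    show "(y k has_real_derivative D k t) (at t within {t0..})"
      if "k \<in> {..<n} \<times> UNIV" "t \<ge> t0" for k t
      using that fraction_deriv by (auto simp: y_def D_def)
    show "y k t0 \<ge> 0" if "k \<in> {..<n} \<times> UNIV" for k
      using that init by (auto simp: y_def fraction_def split: compartment.split)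
    show "\<exists>L. \<forall>t\<in>{t0..T}. y k t \<le> 0 \<longrightarrow> (\<forall>j\<in>{..<n} \<times> UNIV. y k t \<le> y j t) \<longrightarrow> L * y k t \<le> D k t"
      if k_mem: "k \<in> {..<n} \<times> UNIV" for k T
    proof -
      obtain i c where k: "k = (i, c)" "i < n"
        using k_mem by auto
      obtain Bx where Bx: "\<And>t. t \<in> {t0..T} \<Longrightarrow> \<bar>x i t\<bar> \<le> Bx"
        using fraction_bounded[OF \<open>i < n\<close>, of T Infected] by (auto simp: fraction_def)
      obtain Bs where Bs: "\<And>t. t \<in> {t0..T} \<Longrightarrow> \<bar>s i t\<bar> \<le> Bs"
        using fraction_bounded[OF \<open>i < n\<close>, of T Susceptible] by (auto simp: fraction_def)
      define B where "B = max Bx Bs"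
      show ?thesis
      proof (intro exI[of _ "\<alpha> i + \<beta> i * B + \<sigma> i + \<delta> i"] ballI impI)
        fix t assume "t \<in> {t0..T}" "y k t \<le> 0" and min: "\<forall>j\<in>{..<n} \<times> UNIV. y k t \<le> y j t"
        have "(\<alpha> i + \<beta> i * B + \<sigma> i + \<delta> i) * fraction c i t \<le> reaction c i t"
          using \<open>y k t \<le> 0\<close> min \<open>i < n\<close> Bx[OF \<open>t \<in> {t0..T}\<close>] Bs[OF \<open>t \<in> {t0..T}\<close>]
          by (intro reaction_lower_bound) (auto simp: k y_def B_def)
        moreover have "(1 / N i) * net_inflow n F (\<lambda>j. fraction c j t) i \<ge> 0"
          using min \<open>i < n\<close> by (intro flow_term_nonneg_at_min) (auto simp: k y_def)
        ultimately show "(\<alpha> i + \<beta> i * B + \<sigma> i + \<delta> i) * y k t \<le> D k t"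
          by (simp add: k y_def D_def)
      qed
    qed
  qed (use assms in auto)
  then show ?thesis
    by (simp add: y_def)
qed

lemma state_in_simplex:
  assumes "i < n" "t \<ge> t0"
  shows "s i t \<in> {0..1} \<and> e i t \<in> {0..1} \<and> x i t \<in> {0..1} \<and> r i t \<in> {0..1} \<and>
    s i t + e i t + x i t + r i t = 1"
  using fraction_nonneg[OF assms, of Susceptible] fraction_nonneg[OF assms, of Exposed]
    fraction_nonneg[OF assms, of Infected] fraction_nonneg[OF assms, of Recovered]
    total_eq_one[OF assms]
  by (simp add: fraction_def total_def)

end

theorem lemma5:
  fixes n :: nat
    and N :: "nat \<Rightarrow> real"
    and F :: "nat \<Rightarrow> nat \<Rightarrow> real"
    and \<alpha> \<beta> \<sigma> \<delta> :: "nat \<Rightarrow> real"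
    and s e x r :: "nat \<Rightarrow> real \<Rightarrow> real"
    and t0 :: real
  assumes N_pos: "\<And>i. i < n \<Longrightarrow> N i > 0"
    and F_nonneg: "\<And>i j. i < n \<Longrightarrow> j < n \<Longrightarrow> i \<noteq> j \<Longrightarrow> F i j \<ge> 0"
    and F_diag: "\<And>i. i < n \<Longrightarrow> F i i = 0"
    and A1: "\<And>j. j < n \<Longrightarrow>
      (\<Sum>i\<in>{..<n} - {j}. F j i) = (\<Sum>i\<in>{..<n} - {j}. F i j)"
    and rates_pos: "\<And>i. i < n \<Longrightarrow> \<alpha> i > 0 \<and> \<beta> i > 0 \<and> \<sigma> i > 0 \<and> \<delta> i > 0"
    and t0_nonneg: "t0 \<ge> 0"
    and init: "\<And>i. i < n \<Longrightarrow>
      s i t0 \<in> {0..1} \<and> e i t0 \<in> {0..1} \<and> x i t0 \<in> {0..1} \<and> r i t0 \<in> {0..1} \<and>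
      s i t0 + e i t0 + x i t0 + r i t0 = 1"
    and ds: "\<And>i t. i < n \<Longrightarrow> t \<ge> t0 \<Longrightarrow>
      (s i has_real_derivative
        (\<alpha> i * r i t - \<beta> i * x i t * s i t
         + (1 / N i) * (\<Sum>j\<in>{..<n} - {i}. F i j * s j t - F j i * s i t)))
      (at t within {t0..})"
    and de: "\<And>i t. i < n \<Longrightarrow> t \<ge> t0 \<Longrightarrow>
      (e i has_real_derivative
        (\<beta> i * x i t * s i t - \<sigma> i * e i t
         + (1 / N i) * (\<Sum>j\<in>{..<n} - {i}. F i j * e j t - F j i * e i t)))
      (at t within {t0..})"
    and dx: "\<And>i t. i < n \<Longrightarrow> t \<ge> t0 \<Longrightarrow>
      (x i has_real_derivative
        (\<sigma> i * e i t - \<delta> i * x i t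
         + (1 / N i) * (\<Sum>j\<in>{..<n} - {i}. F i j * x j t - F j i * x i t)))
      (at t within {t0..})"
    and dr: "\<And>i t. i < n \<Longrightarrow> t \<ge> t0 \<Longrightarrow>
      (r i has_real_derivative
        (\<delta> i * x i t - \<alpha> i * r i t
         + (1 / N i) * (\<Sum>j\<in>{..<n} - {i}. F i j * r j t - F j i * r i t)))
      (at t within {t0..})"
  shows "\<forall>i<n. \<forall>t\<ge>t0.
      s i t \<in> {0..1} \<and> e i t \<in> {0..1} \<and> x i t \<in> {0..1} \<and> r i t \<in> {0..1} \<and>
      s i t + e i t + x i t + r i t = 1"
proof -
  interpret seirs_network n N F \<alpha> \<beta> \<sigma> \<delta> s e x r t0
    by unfold_locales
      (use N_pos F_nonneg A1 rates_pos init ds de dx dr in \<open>simp_all add: net_inflow_def\<close>)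
  show ?thesis
    using state_in_simplex by blast
qed

end
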